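(* Let a nondegenerate triangle with circumradius $R$ be circumscribed about a central conic one of whose foci coincides with the circumcenter of the triangle, and let $a$ be the semi-major axis of the conic (half the distance between its vertices on the focal axis). Then $R=2a$.
   Context: A central conic is a non-degenerate ellipse or hyperbola. A triangle is circumscribed about a conic if each of its three sidelines is tangent to the conic. *)

theory Defs
  imports "HOL-Analysis.Analysis"
begin

text \<open>Points of the Euclidean plane are modelled as complex numbers.\<close>

definition line_through :: "complex \<Rightarrow> complex \<Rightarrow> complex set" where
  "line_through P Q = {P + of_real t * (Q - P) | t. True}"

text \<open>Non-degenerate ellipse with foci F1, F2 and semi-major axis a
  (the circle, F1 = F2, is included).\<close>
definition is_ellipse :: "complex set \<Rightarrow> complex \<Rightarrow> complex \<Rightarrow> real \<Rightarrow> bool" where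
  "is_ellipse K F1 F2 a \<longleftrightarrow> 0 < a \<and> dist F1 F2 < 2 * a \<and>
     K = {P. dist P F1 + dist P F2 = 2 * a}"

definition is_hyperbola :: "complex set \<Rightarrow> complex \<Rightarrow> complex \<Rightarrow> real \<Rightarrow> bool" where
  "is_hyperbola K F1 F2 a \<longleftrightarrow> 0 < a \<and> 2 * a < dist F1 F2 \<and>
     K = {P. \<bar>dist P F1 - dist P F2\<bar> = 2 * a}"

text \<open>A line L is tangent to a curve K if at some point X of L \<inter> K the curve is,
  locally around X, the zero set of a function differentiable at X with nonzero
  derivative, and L is the line through X in the direction annihilated by that
  derivative (the usual tangent line of a regular curve).\<close>
definition tangent_line :: "complex set \<Rightarrow> complex set \<Rightarrow> bool" where
  "tangent_line L K \<longleftrightarrow>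
     (\<exists>X U g g' d. X \<in> L \<and> X \<in> K \<and> open U \<and> X \<in> U \<and>
        (g has_derivative g') (at X) \<and> g' \<noteq> (\<lambda>_. 0) \<and>
        K \<inter> U = {P \<in> U. g P = (0::real)} \<and>
        d \<noteq> 0 \<and> g' d = 0 \<and> L = {X + of_real t * d | t. True})"

end

(*
  The tangent to the conic at a point X is orthogonal to sgn (X - F1) + s sgn (X - F2), the gradient
  of the focal function |P - F1| + s |P - F2| (s = 1 for the ellipse, s = -1 for the hyperbola).
  Hence the mirror image of F1 in any tangent lies on the line F2 X at distance 2a from F2, and the
  foot of the perpendicular from F1 to a tangent lies on the circle of radius a about the centre
  M = (F1 + F2) / 2. When F1 is the circumcentre of ABC, these feet are the midpoints of the sides.
  So Z = A + B + C - 2 M satisfies |Z - C| = 2 |(A + B) / 2 - M| = 2 a, and likewise for A and B: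
  Z is the circumcentre F1, and R = 2 a.
*)
theory Submission
  imports Defs
begin

lemma norm_segment_offset_le:
  fixes e d :: "'a::real_normed_vector"
  assumes "\<bar>t\<bar> \<le> \<epsilon>"
  shows "norm (\<epsilon> *\<^sub>R e + t *\<^sub>R d) \<le> \<epsilon> * (norm e + norm d)"
proof -
  have "norm (\<epsilon> *\<^sub>R e + t *\<^sub>R d) \<le> \<bar>\<epsilon>\<bar> * norm e + \<bar>t\<bar> * norm d"
    using norm_triangle_ineq[of "\<epsilon> *\<^sub>R e" "t *\<^sub>R d"] by simp
  also have "\<dots> \<le> \<epsilon> * norm e + \<epsilon> * norm d"
    using assms by (simp add: mult_right_mono)
  finally show ?thesis by (simp add: distrib_left)
qed

lemma eventually_segment_offset_less:
  fixes e d :: "'a::real_normed_vector"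
  assumes "r > 0"
  shows "\<forall>\<^sub>F \<epsilon> in at_right 0. \<forall>t. \<bar>t\<bar> \<le> \<epsilon> \<longrightarrow> norm (\<epsilon> *\<^sub>R e + t *\<^sub>R d) < r"
proof -
  define N where "N = norm e + norm d + 1"
  have "N > 0" unfolding N_def by (simp add: add_nonneg_pos)
  have "\<forall>\<^sub>F \<epsilon> in at_right 0. \<epsilon> \<in> {0<..<r / N}"
    using assms \<open>N > 0\<close> by (intro eventually_at_right_real) simp
  then show ?thesis
  proof (rule eventually_mono, intro allI impI)
    fix \<epsilon> t :: real assume \<epsilon>: "\<epsilon> \<in> {0<..<r / N}" and "\<bar>t\<bar> \<le> \<epsilon>"
    then have "norm (\<epsilon> *\<^sub>R e + t *\<^sub>R d) \<le> \<epsilon> * N"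
      using norm_segment_offset_le[of t \<epsilon> e d] unfolding N_def by (simp add: algebra_simps)
    also have "\<epsilon> * N < r"
      using \<epsilon> \<open>N > 0\<close> by (simp add: field_simps)
    finally show "norm (\<epsilon> *\<^sub>R e + t *\<^sub>R d) < r" .
  qed
qed

lemma has_derivative_remainder_on_segments:
  fixes f :: "'a::real_normed_vector \<Rightarrow> real"
  assumes f': "(f has_derivative f') (at X)" and "k > 0"
  shows "\<forall>\<^sub>F \<epsilon> in at_right 0. \<forall>t. \<bar>t\<bar> \<le> \<epsilon> \<longrightarrow>
           \<bar>f (X + \<epsilon> *\<^sub>R e + t *\<^sub>R d) - f X - f' (\<epsilon> *\<^sub>R e + t *\<^sub>R d)\<bar> \<le> k * \<epsilon>"
proof -
  define N where "N = norm e + norm d + 1"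
  have "N > 0" unfolding N_def by (simp add: add_nonneg_pos)
  with assms obtain \<delta> where "\<delta> > 0" and rem: "\<And>y. norm (y - X) < \<delta> \<Longrightarrow>
      \<bar>f y - f X - f' (y - X)\<bar> \<le> k / N * norm (y - X)"
    unfolding has_derivative_at_alt by (metis divide_pos_pos real_norm_def)
  from eventually_segment_offset_less[OF this(1), of e d]
  show ?thesis
  proof (rule eventually_mono, intro allI impI)
    fix \<epsilon> t :: real
    assume small: "\<forall>t. \<bar>t\<bar> \<le> \<epsilon> \<longrightarrow> norm (\<epsilon> *\<^sub>R e + t *\<^sub>R d) < \<delta>" and t: "\<bar>t\<bar> \<le> \<epsilon>"
    have "\<bar>f (X + \<epsilon> *\<^sub>R e + t *\<^sub>R d) - f X - f' (\<epsilon> *\<^sub>R e + t *\<^sub>R d)\<bar>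
        \<le> k / N * norm (\<epsilon> *\<^sub>R e + t *\<^sub>R d)"
      using rem[of "X + \<epsilon> *\<^sub>R e + t *\<^sub>R d"] small t by (simp add: add.assoc)
    also have "\<dots> \<le> k / N * (\<epsilon> * N)"
    proof (intro mult_left_mono)
      have "\<epsilon> * (norm e + norm d) \<le> \<epsilon> * N"
        using t unfolding N_def by (intro mult_left_mono) auto
      then show "norm (\<epsilon> *\<^sub>R e + t *\<^sub>R d) \<le> \<epsilon> * N"
        using norm_segment_offset_le[OF t, of e d] by linarith
    qed (use \<open>k > 0\<close> \<open>N > 0\<close> in simp)
    finally show "\<bar>f (X + \<epsilon> *\<^sub>R e + t *\<^sub>R d) - f X - f' (\<epsilon> *\<^sub>R e + t *\<^sub>R d)\<bar> \<le> k * \<epsilon>"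
      using \<open>N > 0\<close> by simp
  qed
qed

lemma eventually_zero_on_transverse_segments:
  fixes f :: "'a::real_normed_vector \<Rightarrow> real"
  assumes cont: "continuous_on UNIV f" and f': "(f has_derivative f') (at X)"
    and "f X = 0" and "f' e = 0" and "f' d \<noteq> 0"
  shows "\<forall>\<^sub>F \<epsilon> in at_right 0. \<exists>t. \<bar>t\<bar> \<le> \<epsilon> \<and> f (X + \<epsilon> *\<^sub>R e + t *\<^sub>R d) = 0"
proof -
  define \<alpha> where "\<alpha> = f' d"
  have lin: "linear f'" using f' has_derivative_linear by blast
  have f'_seg: "f' (\<epsilon> *\<^sub>R e + t *\<^sub>R d) = t * \<alpha>" for \<epsilon> t
    using \<open>f' e = 0\<close> by (simp add: linear_add[OF lin] linear_scale[OF lin] \<alpha>_def)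
  have "\<bar>\<alpha>\<bar> / 2 > 0" using \<open>f' d \<noteq> 0\<close> by (simp add: \<alpha>_def)
  from has_derivative_remainder_on_segments[OF f' this, of e d]
  have "\<forall>\<^sub>F \<epsilon> in at_right 0. \<epsilon> > 0 \<and> (\<forall>t. \<bar>t\<bar> \<le> \<epsilon> \<longrightarrow>
          \<bar>f (X + \<epsilon> *\<^sub>R e + t *\<^sub>R d) - t * \<alpha>\<bar> \<le> \<bar>\<alpha>\<bar> / 2 * \<epsilon>)"
    using eventually_at_right_less[of 0] by eventually_elim (simp add: f'_seg \<open>f X = 0\<close>)
  then show ?thesis
  proof (rule eventually_mono, elim conjE)
    fix \<epsilon> :: real assume "\<epsilon> > 0" and
      approx: "\<forall>t. \<bar>t\<bar> \<le> \<epsilon> \<longrightarrow> \<bar>f (X + \<epsilon> *\<^sub>R e + t *\<^sub>R d) - t * \<alpha>\<bar> \<le> \<bar>\<alpha>\<bar> / 2 * \<epsilon>"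
    \<comment> \<open>The factor \<open>\<alpha>\<close> fixes the signs at the endpoints, so one form of the IVT suffices.\<close>
    define \<phi> where "\<phi> t = \<alpha> * f (X + \<epsilon> *\<^sub>R e + t *\<^sub>R d)" for t
    have bound: "\<bar>\<phi> t - t * \<alpha>\<^sup>2\<bar> \<le> \<alpha>\<^sup>2 / 2 * \<epsilon>" if "\<bar>t\<bar> \<le> \<epsilon>" for t
    proof -
      have "\<bar>\<phi> t - t * \<alpha>\<^sup>2\<bar> = \<bar>\<alpha>\<bar> * \<bar>f (X + \<epsilon> *\<^sub>R e + t *\<^sub>R d) - t * \<alpha>\<bar>"
        unfolding \<phi>_def by (simp add: abs_mult[symmetric] algebra_simps power2_eq_square)
      also have "\<dots> \<le> \<bar>\<alpha>\<bar> * (\<bar>\<alpha>\<bar> / 2 * \<epsilon>)"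
        using approx that by (intro mult_left_mono) auto
      finally show ?thesis by (simp add: power2_eq_square)
    qed
    have pos: "\<epsilon> * \<alpha>\<^sup>2 > 0" using \<open>f' d \<noteq> 0\<close> \<open>\<epsilon> > 0\<close> by (simp add: \<alpha>_def)
    have "\<bar>\<phi> (-\<epsilon>) + \<epsilon> * \<alpha>\<^sup>2\<bar> \<le> \<epsilon> * \<alpha>\<^sup>2 / 2"
      using bound[of "-\<epsilon>"] \<open>\<epsilon> > 0\<close> by (simp add: mult.commute)
    then have "\<phi> (-\<epsilon>) \<le> 0" using pos by arith
    moreover have "\<bar>\<phi> \<epsilon> - \<epsilon> * \<alpha>\<^sup>2\<bar> \<le> \<epsilon> * \<alpha>\<^sup>2 / 2"
      using bound[of \<epsilon>] \<open>\<epsilon> > 0\<close> by (simp add: mult.commute)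
    then have "0 \<le> \<phi> \<epsilon>" using pos by arith
    moreover have "continuous_on {-\<epsilon>..\<epsilon>} \<phi>"
      unfolding \<phi>_def
      by (intro continuous_intros continuous_on_compose2[OF cont]) auto
    ultimately obtain t where "-\<epsilon> \<le> t" "t \<le> \<epsilon>" "\<phi> t = 0"
      using IVT'[of \<phi> "-\<epsilon>" 0 \<epsilon>] \<open>\<epsilon> > 0\<close> by auto
    then show "\<exists>t. \<bar>t\<bar> \<le> \<epsilon> \<and> f (X + \<epsilon> *\<^sub>R e + t *\<^sub>R d) = 0"
      using \<open>f' d \<noteq> 0\<close> by (intro exI[of _ t]) (auto simp: \<phi>_def \<alpha>_def)
  qed
qed

lemma eventually_nonzero_on_transverse_segments:
  fixes g :: "'a::real_normed_vector \<Rightarrow> real"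
  assumes g': "(g has_derivative g') (at X)" and "g X = 0" and "g' d = 0" and "g' e \<noteq> 0"
  shows "\<forall>\<^sub>F \<epsilon> in at_right 0. \<forall>t. \<bar>t\<bar> \<le> \<epsilon> \<longrightarrow> g (X + \<epsilon> *\<^sub>R e + t *\<^sub>R d) \<noteq> 0"
proof -
  have lin: "linear g'" using g' has_derivative_linear by blast
  have g'_seg: "g' (\<epsilon> *\<^sub>R e + t *\<^sub>R d) = \<epsilon> * g' e" for \<epsilon> t
    using \<open>g' d = 0\<close> by (simp add: linear_add[OF lin] linear_scale[OF lin])
  have "\<bar>g' e\<bar> / 2 > 0" using \<open>g' e \<noteq> 0\<close> by simp
  from has_derivative_remainder_on_segments[OF g' this, of e d]
  show ?thesis
    using eventually_at_right_less[of 0]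
  proof eventually_elim
    case (elim \<epsilon>)
    then show ?case
      using \<open>g X = 0\<close> \<open>g' e \<noteq> 0\<close> by (auto simp: g'_seg abs_mult)
  qed
qed

lemma complex_functional_eq_0:
  fixes l :: "complex \<Rightarrow> real"
  assumes "linear l" and "d \<noteq> 0" and "l d = 0" and "l (\<i> * d) = 0"
  shows "l w = 0"
proof -
  have "w = Re (w / d) *\<^sub>R d + Im (w / d) *\<^sub>R (\<i> * d)"
  proof -
    have "w = (w / d) * d" using \<open>d \<noteq> 0\<close> by simp
    also have "w / d = of_real (Re (w / d)) + \<i> * of_real (Im (w / d))"
      using complex_eq by blast
    finally show ?thesis by (simp add: scaleR_conv_of_real algebra_simps)
  qed
  then have "l w = Re (w / d) * l d + Im (w / d) * l (\<i> * d)"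
    by (metis linear_add[OF assms(1)] linear_scale[OF assms(1)] real_scaleR_def)
  then show ?thesis using assms(3,4) by simp
qed

text \<open>If \<open>f' d \<noteq> 0\<close>, then \<open>f\<close> changes sign along the short segments \<open>X + \<epsilon> e + [-\<epsilon>, \<epsilon>] d\<close>
  with \<open>f' e = 0\<close> and \<open>g' e \<noteq> 0\<close>, on which \<open>g\<close> has no zero: a zero of \<open>f\<close> there lies in \<open>K\<close>
  but not in the zero set of \<open>g\<close>.\<close>
lemma zero_set_tangent_direction:
  fixes f g :: "complex \<Rightarrow> real"
  assumes "open U" and "X \<in> U" and g': "(g has_derivative g') (at X)" and "g' \<noteq> (\<lambda>_. 0)"
    and KU: "K \<inter> U = {P \<in> U. g P = 0}" and "d \<noteq> 0" and "g' d = 0"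
    and cont: "continuous_on UNIV f" and fK: "{P. f P = 0} \<subseteq> K" and "f X = 0"
    and f': "(f has_derivative f') (at X)"
  shows "f' d = 0"
proof (rule ccontr)
  assume "f' d \<noteq> 0"
  have lin_f: "linear f'" and lin_g: "linear g'"
    using f' g' has_derivative_linear by blast+
  have "g' (\<i> * d) \<noteq> 0"
    using complex_functional_eq_0[OF lin_g \<open>d \<noteq> 0\<close> \<open>g' d = 0\<close>] \<open>g' \<noteq> (\<lambda>_. 0)\<close> by blast
  define e where "e = f' (\<i> * d) *\<^sub>R d - f' d *\<^sub>R (\<i> * d)"
  have "f' e = 0"
    unfolding e_def by (simp add: linear_diff[OF lin_f] linear_scale[OF lin_f])
  have "g' e \<noteq> 0"
    unfolding e_def using \<open>f' d \<noteq> 0\<close> \<open>g' (\<i> * d) \<noteq> 0\<close> \<open>g' d = 0\<close>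
    by (simp add: linear_diff[OF lin_g] linear_scale[OF lin_g])
  have "g X = 0" using KU fK \<open>f X = 0\<close> \<open>X \<in> U\<close> by blast
  obtain r where "r > 0" "ball X r \<subseteq> U"
    using \<open>open U\<close> \<open>X \<in> U\<close> open_contains_ball by blast
  have "\<forall>\<^sub>F \<epsilon> in at_right 0. (\<exists>t. \<bar>t\<bar> \<le> \<epsilon> \<and> f (X + \<epsilon> *\<^sub>R e + t *\<^sub>R d) = 0) \<and>
      (\<forall>t. \<bar>t\<bar> \<le> \<epsilon> \<longrightarrow> g (X + \<epsilon> *\<^sub>R e + t *\<^sub>R d) \<noteq> 0) \<and>
      (\<forall>t. \<bar>t\<bar> \<le> \<epsilon> \<longrightarrow> norm (\<epsilon> *\<^sub>R e + t *\<^sub>R d) < r)"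
    by (intro eventually_conj eventually_segment_offset_less \<open>r > 0\<close>
        eventually_zero_on_transverse_segments[OF cont f' \<open>f X = 0\<close> \<open>f' e = 0\<close> \<open>f' d \<noteq> 0\<close>]
        eventually_nonzero_on_transverse_segments[OF g' \<open>g X = 0\<close> \<open>g' d = 0\<close> \<open>g' e \<noteq> 0\<close>])
  then obtain \<epsilon> t where "\<bar>t\<bar> \<le> \<epsilon>" and Z: "f (X + \<epsilon> *\<^sub>R e + t *\<^sub>R d) = 0"
    "g (X + \<epsilon> *\<^sub>R e + t *\<^sub>R d) \<noteq> 0" "norm (\<epsilon> *\<^sub>R e + t *\<^sub>R d) < r"
    using eventually_happens'[OF trivial_limit_at_right_real] by blast
  have "X + \<epsilon> *\<^sub>R e + t *\<^sub>R d \<in> K" using Z(1) fK by blast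
  moreover have "X + \<epsilon> *\<^sub>R e + t *\<^sub>R d \<in> U"
  proof (rule subsetD[OF \<open>ball X r \<subseteq> U\<close>])
    have "dist X (X + (\<epsilon> *\<^sub>R e + t *\<^sub>R d)) = norm (\<epsilon> *\<^sub>R e + t *\<^sub>R d)"
      by (metis add_diff_cancel_left' dist_commute dist_norm)
    with Z(3) show "X + \<epsilon> *\<^sub>R e + t *\<^sub>R d \<in> ball X r" by (simp add: add.assoc)
  qed
  ultimately show False using KU Z(2) by blast
qed

lemma tangent_lineE:
  assumes "tangent_line L K"
  obtains X d where "X \<in> K" and "d \<noteq> 0" and "L = {X + of_real t * d | t. True}"
    and "\<And>f f'. continuous_on UNIV f \<Longrightarrow> {P. f P = (0::real)} \<subseteq> K \<Longrightarrow> f X = 0 \<Longrightarrow>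
           (f has_derivative f') (at X) \<Longrightarrow> f' d = 0"
proof -
  obtain X U g g' d where "X \<in> K" "open U" "X \<in> U" "(g has_derivative g') (at X)"
    "g' \<noteq> (\<lambda>_. 0)" "K \<inter> U = {P \<in> U. g P = (0::real)}" "d \<noteq> 0" "g' d = 0"
    "L = {X + of_real t * d | t. True}"
    using assms unfolding tangent_line_def by blast
  with zero_set_tangent_direction[of U X g g' K d] show ?thesis
    using that by blast
qed

lemma has_derivative_dist_left:
  fixes X F :: "'a::real_inner"
  assumes "X \<noteq> F"
  shows "((\<lambda>P. dist P F) has_derivative (\<lambda>h. inner h (sgn (X - F)))) (at X)"
proof -
  have "((\<lambda>P. P - F) has_derivative (\<lambda>h. h)) (at X)"
    by (auto intro!: derivative_eq_intros)
  from has_derivative_compose[OF this has_derivative_norm[of "X - F"]]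
  show ?thesis using assms by (simp add: dist_norm)
qed

lemma conic_focal_equation:
  assumes "is_ellipse K F1 F2 a \<or> is_hyperbola K F1 F2 a" and "X \<in> K"
  obtains s c where "\<bar>s\<bar> = 1" and "\<bar>c\<bar> = 2 * a" and "dist F1 F2 \<noteq> 2 * a"
    and "dist X F1 + s * dist X F2 = c" and "{P. dist P F1 + s * dist P F2 = c} \<subseteq> K"
proof (cases "is_ellipse K F1 F2 a")
  case True
  then show ?thesis using \<open>X \<in> K\<close> that[of 1 "2 * a"] unfolding is_ellipse_def by auto
next
  case False
  then have hyp: "is_hyperbola K F1 F2 a" using assms(1) by blast
  show ?thesis
  proof (rule that[of "-1" "dist X F1 - dist X F2"])
    show "\<bar>dist X F1 - dist X F2\<bar> = 2 * a"
      using hyp \<open>X \<in> K\<close> unfolding is_hyperbola_def by auto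
    then show "{P. dist P F1 + - 1 * dist P F2 = dist X F1 - dist X F2} \<subseteq> K"
      using hyp unfolding is_hyperbola_def by auto
  qed (use hyp in \<open>auto simp: is_hyperbola_def\<close>)
qed

lemma focal_equation_point_ne_foci:
  fixes X F1 F2 :: "'a::real_normed_vector"
  assumes "\<bar>s\<bar> = 1" and "dist X F1 + s * dist X F2 = c" and "dist F1 F2 \<noteq> \<bar>c\<bar>"
  shows "X \<noteq> F1" and "X \<noteq> F2"
  using assms by (auto simp: abs_mult dist_commute)

lemma focal_directions_combination_nonzero:
  fixes X F1 F2 :: "'a::real_normed_vector"
  assumes s: "\<bar>s\<bar> = 1" and X: "dist X F1 + s * dist X F2 = c" and "dist F1 F2 \<noteq> \<bar>c\<bar>"
  shows "sgn (X - F1) + s *\<^sub>R sgn (X - F2) \<noteq> 0"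
proof
  assume "sgn (X - F1) + s *\<^sub>R sgn (X - F2) = 0"
  then have u1: "sgn (X - F1) = - (s *\<^sub>R sgn (X - F2))" by (simp add: add_eq_0_iff)
  have "X \<noteq> F1" "X \<noteq> F2" using focal_equation_point_ne_foci[OF assms] by blast+
  have "F2 - F1 = dist X F1 *\<^sub>R sgn (X - F1) - dist X F2 *\<^sub>R sgn (X - F2)"
    using \<open>X \<noteq> F1\<close> \<open>X \<noteq> F2\<close> by (simp add: sgn_div_norm dist_norm)
  also have "\<dots> = - ((s * dist X F1 + dist X F2) *\<^sub>R sgn (X - F2))"
    unfolding u1 by (simp add: algebra_simps)
  also have "s * dist X F1 + dist X F2 = s * c"
    using X s by (auto simp: abs_if split: if_splits)
  finally have "dist F2 F1 = \<bar>s * c\<bar>"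
    using \<open>X \<noteq> F2\<close> by (simp add: dist_norm norm_sgn)
  with assms show False by (simp add: abs_mult dist_commute)
qed

lemma complex_orthogonal_same_parallel:
  fixes v d w :: complex
  assumes "inner v w = 0" and "inner d w = 0" and "w \<noteq> 0"
  shows "(inner d d) *\<^sub>R v = (inner v d) *\<^sub>R d"
proof -
  have vw: "Re v * Re w + Im v * Im w = 0" and dw: "Re d * Re w + Im d * Im w = 0"
    using assms(1,2) by (simp_all add: inner_complex_def)
  have "(Re v * Im d - Im v * Re d) * Re w = 0" and "(Re v * Im d - Im v * Re d) * Im w = 0"
    using vw dw by algebra+
  then have cross: "Re v * Im d = Im v * Re d"
    using assms(3) by (auto simp: complex_eq_iff)
  show ?thesis
    by (simp add: complex_eq_iff inner_complex_def algebra_simps) (metis cross mult.commute)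
qed

text \<open>\<open>2 Y - F1\<close> is the mirror image of \<open>F1\<close> in the line through \<open>X\<close> with direction \<open>d\<close>.\<close>
lemma reflect_focus_in_tangent:
  fixes X F1 F2 d Y :: complex
  assumes "X \<noteq> F1" and "X \<noteq> F2" and "\<bar>s\<bar> = 1" and "d \<noteq> 0"
    and w: "sgn (X - F1) + s *\<^sub>R sgn (X - F2) \<noteq> 0"
    and dw: "inner d (sgn (X - F1) + s *\<^sub>R sgn (X - F2)) = 0"
    and Y: "Y = X + t *\<^sub>R d" and perp: "inner (F1 - Y) d = 0"
  shows "2 *\<^sub>R Y - F1 = X + (s * dist X F1) *\<^sub>R sgn (X - F2)"
proof -
  define u1 u2 r1 D where "u1 = sgn (X - F1)" and "u2 = sgn (X - F2)" and "r1 = dist X F1"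
    and "D = inner d d"
  have "D > 0" using \<open>d \<noteq> 0\<close> unfolding D_def by simp
  have X1: "X - F1 = r1 *\<^sub>R u1"
    using \<open>X \<noteq> F1\<close> unfolding u1_def r1_def by (simp add: sgn_div_norm dist_norm)
  have "inner (u1 - s *\<^sub>R u2) (u1 + s *\<^sub>R u2) = (norm u1)\<^sup>2 - s\<^sup>2 * (norm u2)\<^sup>2"
    by (simp add: inner_add_right inner_diff_left inner_commute dot_square_norm
        power2_eq_square algebra_simps)
  also have "\<dots> = 0"
    using \<open>X \<noteq> F1\<close> \<open>X \<noteq> F2\<close> power2_abs[of s] \<open>\<bar>s\<bar> = 1\<close> unfolding u1_def u2_def
    by (simp add: norm_sgn)
  finally have "inner (u1 - s *\<^sub>R u2) (u1 + s *\<^sub>R u2) = 0" .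
  from complex_orthogonal_same_parallel[OF this dw[folded u1_def u2_def]
      w[folded u1_def u2_def]]
  have "D *\<^sub>R (u1 - s *\<^sub>R u2) = inner (u1 - s *\<^sub>R u2) d *\<^sub>R d"
    unfolding D_def .
  also have "inner (u1 - s *\<^sub>R u2) d = 2 * inner u1 d"
    using dw unfolding u1_def u2_def
    by (simp add: inner_diff_left inner_diff_right inner_add_right inner_commute)
  finally have parallel: "D *\<^sub>R (u1 - s *\<^sub>R u2) = (2 * inner u1 d) *\<^sub>R d" .
  have "F1 - Y = - (X - F1) - t *\<^sub>R d"
    unfolding Y by (simp add: algebra_simps)
  then have "inner (F1 - Y) d = - r1 * inner u1 d - t * D"
    unfolding X1 D_def by (simp add: inner_diff_left)
  then have tD: "t * D = - r1 * inner u1 d"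
    using perp by simp
  have "D *\<^sub>R (2 *\<^sub>R Y - F1 - X) = D *\<^sub>R ((X - F1) + (2 * t) *\<^sub>R d)"
    unfolding Y by (simp add: algebra_simps scaleR_2)
  also have "\<dots> = (D * r1) *\<^sub>R u1 + (2 * (t * D)) *\<^sub>R d"
    unfolding X1 by (simp add: algebra_simps)
  also have "\<dots> = (D * r1) *\<^sub>R u1 - r1 *\<^sub>R ((2 * inner u1 d) *\<^sub>R d)"
    unfolding tD by (simp add: algebra_simps)
  also have "\<dots> = D *\<^sub>R ((s * r1) *\<^sub>R u2)"
    unfolding parallel[symmetric] by (simp add: algebra_simps)
  finally have "2 *\<^sub>R Y - F1 - X = (s * r1) *\<^sub>R u2"
    using \<open>D > 0\<close> by (metis less_irrefl scaleR_cancel_left)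
  then show ?thesis unfolding u2_def r1_def by (simp add: algebra_simps)
qed

lemma conic_tangent_bisects_focal_directions:
  assumes conic: "is_ellipse K F1 F2 a \<or> is_hyperbola K F1 F2 a" and tangent: "tangent_line L K"
  obtains X d s where "d \<noteq> 0" and "L = {X + of_real t * d | t. True}" and "\<bar>s\<bar> = 1"
    and "X \<noteq> F1" and "X \<noteq> F2" and "\<bar>dist X F2 + s * dist X F1\<bar> = 2 * a"
    and "sgn (X - F1) + s *\<^sub>R sgn (X - F2) \<noteq> 0"
    and "inner d (sgn (X - F1) + s *\<^sub>R sgn (X - F2)) = 0"
proof -
  obtain X d where "X \<in> K" and "d \<noteq> 0" and L: "L = {X + of_real t * d | t. True}"
    and kernel: "\<And>f f'. continuous_on UNIV f \<Longrightarrow> {P. f P = (0::real)} \<subseteq> K \<Longrightarrow> f X = 0 \<Longrightarrow>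
                   (f has_derivative f') (at X) \<Longrightarrow> f' d = 0"
    using tangent_lineE[OF tangent] by blast
  obtain s c where s: "\<bar>s\<bar> = 1" and c: "\<bar>c\<bar> = 2 * a" and "dist F1 F2 \<noteq> 2 * a"
    and Xc: "dist X F1 + s * dist X F2 = c" and level: "{P. dist P F1 + s * dist P F2 = c} \<subseteq> K"
    by (rule conic_focal_equation[OF conic \<open>X \<in> K\<close>])
  then have F12: "dist F1 F2 \<noteq> \<bar>c\<bar>" by simp
  have "X \<noteq> F1" and "X \<noteq> F2"
    using focal_equation_point_ne_foci[OF s Xc F12] by blast+
  define f where "f P = dist P F1 + s * dist P F2 - c" for P
  have "continuous_on UNIV f" and "{P. f P = 0} \<subseteq> K" and "f X = 0"
    using level Xc unfolding f_def by (auto intro!: continuous_intros)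
  moreover have
    "(f has_derivative (\<lambda>h. inner h (sgn (X - F1)) + s * inner h (sgn (X - F2)) - 0)) (at X)"
    unfolding f_def
    by (intro has_derivative_diff has_derivative_add has_derivative_mult_right has_derivative_const
        has_derivative_dist_left \<open>X \<noteq> F1\<close> \<open>X \<noteq> F2\<close>)
  ultimately have "inner d (sgn (X - F1) + s *\<^sub>R sgn (X - F2)) = 0"
    by (auto dest: kernel simp: inner_add_right)
  moreover have "\<bar>dist X F2 + s * dist X F1\<bar> = 2 * a"
  proof -
    have "dist X F2 + s * dist X F1 = s * c"
      using Xc s by (auto simp: abs_if split: if_splits)
    then show ?thesis using s c by (simp add: abs_mult)
  qed
  ultimately show ?thesis
    using that \<open>d \<noteq> 0\<close> L s \<open>X \<noteq> F1\<close> \<open>X \<noteq> F2\<close> focal_directions_combination_nonzero[OF s Xc F12]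
    by blast
qed

lemma tangent_foot_on_auxiliary_circle:
  assumes conic: "is_ellipse K F1 F2 a \<or> is_hyperbola K F1 F2 a"
    and tangent: "tangent_line L K" and "Y \<in> L"
    and perp: "\<forall>P\<in>L. \<forall>Q\<in>L. inner (F1 - Y) (P - Q) = 0"
  shows "dist Y ((F1 + F2) / 2) = a"
proof -
  obtain X d s where "d \<noteq> 0" and L: "L = {X + of_real t * d | t. True}" and s: "\<bar>s\<bar> = 1"
    and "X \<noteq> F1" and "X \<noteq> F2" and focal: "\<bar>dist X F2 + s * dist X F1\<bar> = 2 * a"
    and w: "sgn (X - F1) + s *\<^sub>R sgn (X - F2) \<noteq> 0"
    and bisect: "inner d (sgn (X - F1) + s *\<^sub>R sgn (X - F2)) = 0"
    by (rule conic_tangent_bisects_focal_directions[OF conic tangent])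
  obtain t where Y: "Y = X + t *\<^sub>R d"
    using \<open>Y \<in> L\<close> unfolding L by (auto simp: scaleR_conv_of_real)
  have "X + of_real 1 * d \<in> L" and "X + of_real 0 * d \<in> L"
    unfolding L by blast+
  with perp have "inner (F1 - Y) d = 0" by fastforce
  from reflect_focus_in_tangent[OF \<open>X \<noteq> F1\<close> \<open>X \<noteq> F2\<close> s \<open>d \<noteq> 0\<close> w bisect Y this]
  have "2 *\<^sub>R Y - F1 - F2 = (dist X F2 + s * dist X F1) *\<^sub>R sgn (X - F2)"
    using \<open>X \<noteq> F2\<close> by (simp add: sgn_div_norm dist_norm algebra_simps)
  then have "norm (2 *\<^sub>R Y - F1 - F2) = 2 * a"
    using \<open>X \<noteq> F2\<close> focal by (simp add: norm_sgn)
  moreover have "2 *\<^sub>R Y - F1 - F2 = 2 * (Y - (F1 + F2) / 2)"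
    by (simp add: scaleR_conv_of_real field_simps)
  ultimately show ?thesis
    by (simp only: dist_norm norm_mult) simp
qed

lemma equidistant_imp_orthogonal:
  fixes P Q A B :: "'a::real_inner"
  assumes "dist P A = dist P B" and "dist Q A = dist Q B"
  shows "inner (P - Q) (A - B) = 0"
proof -
  have "(dist P A)\<^sup>2 - (dist P B)\<^sup>2 - ((dist Q A)\<^sup>2 - (dist Q B)\<^sup>2) = - 2 * inner (P - Q) (A - B)"
    by (simp add: dist_norm power2_norm_eq_inner inner_diff_left inner_diff_right inner_commute
        algebra_simps)
  with assms show ?thesis by simp
qed

lemma circumcenter_unique:
  fixes A B C P Q :: complex
  assumes "\<not> collinear {A, B, C}"
    and P: "dist P A = dist P B" "dist P C = dist P B"
    and Q: "dist Q A = dist Q B" "dist Q C = dist Q B"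
  shows "P = Q"
proof (rule ccontr)
  assume "P \<noteq> Q"
  have "A \<noteq> B" using assms(1) by auto
  have "inner (A - B) (P - Q) = 0" and "inner (C - B) (P - Q) = 0"
    using equidistant_imp_orthogonal[OF P(1) Q(1)] equidistant_imp_orthogonal[OF P(2) Q(2)]
    by (simp_all add: inner_commute)
  from complex_orthogonal_same_parallel[OF this(2,1)] \<open>P \<noteq> Q\<close>
  have parallel: "inner (A - B) (A - B) *\<^sub>R (C - B) = inner (C - B) (A - B) *\<^sub>R (A - B)"
    by simp
  have "C - B = (1 / inner (A - B) (A - B)) *\<^sub>R (inner (A - B) (A - B) *\<^sub>R (C - B))"
    using \<open>A \<noteq> B\<close> by simp
  also have "\<dots> = (inner (C - B) (A - B) / inner (A - B) (A - B)) *\<^sub>R (A - B)"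
    unfolding parallel by simp
  finally have "collinear {0, A - B, C - B}"
    by (metis collinear_lemma)
  with assms(1) show False
    by (simp add: collinear_3)
qed

lemma chord_midpoint_on_auxiliary_circle:
  assumes conic: "is_ellipse K F1 F2 a \<or> is_hyperbola K F1 F2 a"
    and tangent: "tangent_line (line_through P Q) K" and "dist F1 P = dist F1 Q"
  shows "dist ((P + Q) / 2) ((F1 + F2) / 2) = a"
proof (rule tangent_foot_on_auxiliary_circle[OF conic tangent])
  show "(P + Q) / 2 \<in> line_through P Q"
    unfolding line_through_def by (rule CollectI, rule exI[of _ "1 / 2"]) (simp add: field_simps)
  have "dist ((P + Q) / 2) P = dist ((P + Q) / 2) Q"
    by (simp add: dist_norm norm_minus_commute field_simps)
  from equidistant_imp_orthogonal[OF \<open>dist F1 P = dist F1 Q\<close> this]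
  have "inner (F1 - (P + Q) / 2) (Q - P) = 0"
    by (metis inner_minus_right minus_diff_eq neg_equal_0_iff_equal)
  show "\<forall>P'\<in>line_through P Q. \<forall>Q'\<in>line_through P Q. inner (F1 - (P + Q) / 2) (P' - Q') = 0"
  proof (intro ballI)
    fix P' Q' assume "P' \<in> line_through P Q" "Q' \<in> line_through P Q"
    then obtain t1 t2 where P'Q': "P' = P + of_real t1 * (Q - P)" "Q' = P + of_real t2 * (Q - P)"
      unfolding line_through_def by blast
    have "P' - Q' = (t1 - t2) *\<^sub>R (Q - P)"
      unfolding P'Q' by (simp add: scaleR_conv_of_real algebra_simps)
    with \<open>inner (F1 - (P + Q) / 2) (Q - P) = 0\<close>
    show "inner (F1 - (P + Q) / 2) (P' - Q') = 0" by simp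
  qed
qed

lemma dist_antimedial_vertex:
  fixes A B C M :: complex
  shows "dist (A + B + C - 2 * M) C = 2 * dist ((A + B) / 2) M"
proof -
  have "A + B + C - 2 * M - C = 2 * ((A + B) / 2 - M)"
    by (simp add: field_simps)
  then show ?thesis by (simp only: dist_norm norm_mult) simp
qed

theorem corollary2p4:
  fixes A B C F1 F2 :: complex and K :: "complex set" and a R :: real
  assumes nondeg: "\<not> collinear {A, B, C}"
    and circ: "dist F1 A = R" "dist F1 B = R" "dist F1 C = R"
    and conic: "is_ellipse K F1 F2 a \<or> is_hyperbola K F1 F2 a"
    and tAB: "tangent_line (line_through A B) K"
    and tBC: "tangent_line (line_through B C) K"
    and tCA: "tangent_line (line_through C A) K"
  shows "R = 2 * a"
proof -
  define M where "M = (F1 + F2) / 2"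
  define Z where "Z = A + B + C - 2 * M"
  have "dist ((A + B) / 2) M = a" "dist ((B + C) / 2) M = a" "dist ((C + A) / 2) M = a"
    using chord_midpoint_on_auxiliary_circle[OF conic tAB]
      chord_midpoint_on_auxiliary_circle[OF conic tBC]
      chord_midpoint_on_auxiliary_circle[OF conic tCA] circ
    unfolding M_def by simp_all
  then have "dist Z C = 2 * a" "dist Z A = 2 * a" "dist Z B = 2 * a"
    using dist_antimedial_vertex[of A B C M] dist_antimedial_vertex[of B C A M]
      dist_antimedial_vertex[of C A B M]
    unfolding Z_def by (simp_all add: ac_simps)
  then have "F1 = Z"
    using circumcenter_unique[OF nondeg] circ by (simp add: dist_commute)
  with circ(1) \<open>dist Z A = 2 * a\<close> show ?thesis by simp
qed

end
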